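(* Let $H$ be a complex Hilbert space with $\dim H=2$, let $u\in H$ be a unit vector and $P=|u\rangle\langle u|$ the corresponding rank-one orthogonal projection, and let $R\in B(H)_+$. Define $R_0:=R$ and $R_{n+1}:=R_n^{1/2}(I-P)R_n^{1/2}$ for $n\ge0$. Then $R_n$ converges in norm to $$R_\infty=\begin{cases}0, & \text{if } PR\neq RP,\\ R^{1/2}(I-P)R^{1/2}=(I-P)R(I-P), & \text{if } PR=RP.\end{cases}$$
   Context: For vectors $x,y$, $|x\rangle\langle y|$ denotes the operator $z\mapsto\langle y,z\rangle x$. $B(H)_+$ denotes the positive bounded operators on $H$, and $R^{1/2}$ is the positive square root. *)

theory Defs
  imports "HOL-Analysis.Analysis"
begin

text \<open>The 2-dimensional complex Hilbert space H is modelled as complex^2 with the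
standard inner product (antilinear in the first argument); operators on H are
2x2 complex matrices acting via *v.\<close>

definition cinner :: "complex^'n \<Rightarrow> complex^'n \<Rightarrow> complex" where
  "cinner x y = (\<Sum>i\<in>UNIV. cnj (x $ i) * y $ i)"

definition ketbra :: "complex^'n \<Rightarrow> complex^'n \<Rightarrow> complex^'n^'n" where
  "ketbra x y = (\<chi> i j. x $ i * cnj (y $ j))"

definition pos_op :: "complex^'n^'n \<Rightarrow> bool" where
  "pos_op A \<longleftrightarrow> (\<forall>x. cinner x (A *v x) \<in> \<real> \<and> 0 \<le> Re (cinner x (A *v x)))"

definition op_sqrt :: "complex^'n^'n \<Rightarrow> complex^'n^'n" where
  "op_sqrt A = (THE B. pos_op B \<and> B ** B = A)"

definition opnorm :: "complex^'n^'n \<Rightarrow> real" where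
  "opnorm A = onorm (\<lambda>x. A *v x)"

primrec Rseq :: "complex^'n^'n \<Rightarrow> complex^'n^'n \<Rightarrow> nat \<Rightarrow> complex^'n^'n" where
  "Rseq P R 0 = R"
| "Rseq P R (Suc n) = op_sqrt (Rseq P R n) ** (mat 1 - P) ** op_sqrt (Rseq P R n)"

end

(*
  Write Q = I - P = |v><v| with v a unit vector orthogonal to u, S = R^(1/2) and w = S v.
  Then R_1 = S Q S = |w><w|, and every later iterate is a nonnegative multiple c |w><w|, whose
  square root is sqrt c |w><w| / |w|.  Hence R_(n+1) = k^n R_1 with k = |<v,w>|^2 / |w|^2 <= 1.
  Equality k = 1 (for w <> 0) means that v is an eigenvector of S, i.e. that S, and with it
  R = S^2, commutes with Q; conversely S, being a polynomial in R, commutes with Q whenever R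
  does.  So R_n -> 0 if PR <> RP, while for PR = RP the iterates are constant from R_1 on and
  S Q S = Q S S Q = Q R Q.  Square roots of positive 2x2 matrices are computed explicitly from
  the Cayley-Hamilton theorem.
*)

theory Submission
  imports Defs
begin

lemma matrix_diff_ldistrib: "A ** (B - C) = A ** B - A ** (C :: 'a::ring_1^'n^'m)"
  by (vector matrix_matrix_mult_def sum_subtractf field_simps)

lemma matrix_diff_rdistrib: "(A - B) ** C = A ** C - B ** (C :: 'a::ring_1^'n^'m)"
  by (vector matrix_matrix_mult_def sum_subtractf field_simps)

lemma matrix_add_rdistrib: "(A + B) ** C = A ** C + B ** (C :: 'a::semiring_1^'n^'m)"
  by (vector matrix_matrix_mult_def sum.distrib field_simps)

lemma mat_1_diff_commute_iff:
  "(mat 1 - P) ** R = R ** (mat 1 - P) \<longleftrightarrow> P ** R = R ** (P :: 'a::ring_1^'n^'n)"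
  by (simp add: matrix_diff_rdistrib matrix_diff_ldistrib)

lemma mat_of_real: "mat (of_real r) = r *\<^sub>R mat 1"
  by (simp add: vec_eq_iff mat_def of_real_def)

lemma matrix_commute_square:
  fixes B C :: "'a::semiring_1^'n^'n"
  assumes "B ** C = C ** B"
  shows "B ** B ** C = C ** (B ** B)"
proof -
  have "B ** B ** C = B ** (C ** B)"
    by (simp add: assms flip: matrix_mul_assoc)
  also have "\<dots> = C ** (B ** B)"
    by (simp add: assms matrix_mul_assoc)
  finally show ?thesis .
qed

lemma matrix_commute_idempotent_sandwich:
  fixes B Q :: "'a::semiring_1^'n^'n"
  assumes "B ** Q = Q ** B" "Q ** Q = Q"
  shows "B ** Q ** B = Q ** (B ** B) ** Q"
proof -
  have "B ** Q ** B = B ** (Q ** Q) ** B"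
    by (simp only: assms(2))
  also have "\<dots> = (B ** Q) ** (Q ** B)"
    by (simp only: matrix_mul_assoc)
  also have "\<dots> = (Q ** B) ** (B ** Q)"
    by (simp only: assms(1))
  also have "\<dots> = Q ** (B ** B) ** Q"
    by (simp only: matrix_mul_assoc)
  finally show ?thesis .
qed

lemma matrix_vector_mult_scale: "(A :: 'a::comm_ring_1^'n^'m) *v (c *s x) = c *s (A *v x)"
  by (simp add: matrix_vector_mult_def sum_distrib_left vec_eq_iff algebra_simps)

lemma scaleR_matrix_vector_mult: "(r *\<^sub>R A :: complex^'n^'m) *v x = r *\<^sub>R (A *v x)"
  by (simp add: matrix_vector_mult_def scaleR_sum_right vec_eq_iff)

lemma opnorm_scaleR: "opnorm (r *\<^sub>R A) = \<bar>r\<bar> * opnorm A"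
  unfolding opnorm_def scaleR_matrix_vector_mult
  by (rule onorm_scaleR) simp

section \<open>Inner product and rank-one operators\<close>

lemma cinner_add_left: "cinner (x + y) z = cinner x z + cinner y z"
  by (simp add: cinner_def sum.distrib algebra_simps)

lemma cinner_add_right: "cinner x (y + z) = cinner x y + cinner x z"
  by (simp add: cinner_def sum.distrib algebra_simps)

lemma cinner_diff_left: "cinner (x - y) z = cinner x z - cinner y z"
  by (simp add: cinner_def sum_subtractf algebra_simps)

lemma cinner_diff_right: "cinner x (y - z) = cinner x y - cinner x z"
  by (simp add: cinner_def sum_subtractf algebra_simps)

lemma cinner_scale_left: "cinner (c *s x) y = cnj c * cinner x y"
  by (simp add: cinner_def sum_distrib_left algebra_simps)

lemma cinner_scale_right: "cinner x (c *s y) = c * cinner x y"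
  by (simp add: cinner_def sum_distrib_left algebra_simps)

lemma cinner_commute: "cinner y x = cnj (cinner x y)"
  by (simp add: cinner_def mult.commute)

lemma cinner_self: "cinner x x = of_real ((norm x)\<^sup>2)"
proof -
  have "cinner x x = (\<Sum>i\<in>UNIV. of_real ((cmod (x $ i))\<^sup>2))"
    unfolding cinner_def by (simp only: complex_norm_square mult.commute)
  also have "\<dots> = of_real ((norm x)\<^sup>2)"
    by (simp add: norm_vec_def L2_set_def sum_nonneg)
  finally show ?thesis .
qed

lemma cinner_axis_left: "cinner (axis i 1) x = x $ i"
  unfolding cinner_def axis_def
  by (simp add: if_distrib[of cnj] if_distrib[of "\<lambda>c. c * _"] cong: if_cong)

lemma cinner_matrix_axis: "cinner (axis i 1) (A *v axis j 1) = A $ i $ j"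
  unfolding cinner_axis_left
  unfolding matrix_vector_mult_def axis_def
  by (simp add: if_distrib[of "\<lambda>c. _ * c"] cong: if_cong)

lemma norm_diff_projection:
  assumes "cinner v v = 1"
  shows "(norm (w - cinner v w *s v))\<^sup>2 = (norm w)\<^sup>2 - (cmod (cinner v w))\<^sup>2"
proof -
  have "complex_of_real ((norm (w - cinner v w *s v))\<^sup>2) = cinner w w - cinner v w * cinner w v"
    unfolding cinner_self[symmetric]
    by (simp add: cinner_diff_left cinner_diff_right cinner_scale_left cinner_scale_right assms
        algebra_simps flip: cinner_commute[of v w])
  also have "\<dots> = of_real ((norm w)\<^sup>2 - (cmod (cinner v w))\<^sup>2)"
    by (simp only: of_real_diff cinner_self complex_norm_square cinner_commute[of w v])
  finally show ?thesis
    by (simp only: of_real_eq_iff)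
qed

lemma overlap_le_1:
  assumes "cinner v v = 1"
  shows "(cmod (cinner v w) / norm w)\<^sup>2 \<le> 1"
  using norm_diff_projection[OF assms, of w]
  by (smt (verit) divide_le_eq_1 power_divide zero_le_power2)

lemma overlap_eq_1_iff:
  assumes "cinner v v = 1" "w \<noteq> 0"
  shows "(cmod (cinner v w) / norm w)\<^sup>2 = 1 \<longleftrightarrow> w = cinner v w *s v"
proof -
  have "(cmod (cinner v w) / norm w)\<^sup>2 = 1 \<longleftrightarrow> (norm w)\<^sup>2 - (cmod (cinner v w))\<^sup>2 = 0"
    using assms(2) by (simp add: power_divide)
  also have "\<dots> \<longleftrightarrow> w = cinner v w *s v"
    by (simp flip: norm_diff_projection[OF assms(1)])
  finally show ?thesis .
qed

lemma ketbra_zero_left: "ketbra 0 y = 0"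
  by (simp add: ketbra_def vec_eq_iff)

lemma ketbra_scale_left: "ketbra (c *s x) y = ketbra x (cnj c *s y)"
  by (simp add: ketbra_def vec_eq_iff algebra_simps)

lemma ketbra_of_real_scale: "ketbra (of_real r *s x) y = r *\<^sub>R ketbra x y"
  by (simp add: ketbra_def vec_eq_iff) (simp add: scaleR_conv_of_real)

lemma ketbra_mult_vector: "ketbra x y *v z = cinner y z *s x"
  by (simp add: ketbra_def matrix_vector_mult_def cinner_def vec_eq_iff sum_distrib_left
      algebra_simps)

lemma ketbra_mult_ketbra: "ketbra x y ** ketbra z w = ketbra (cinner y z *s x) w"
  by (simp add: ketbra_def matrix_matrix_mult_def cinner_def vec_eq_iff sum_distrib_left
      sum_distrib_right algebra_simps)

lemma matrix_mult_ketbra: "A ** ketbra x y = ketbra (A *v x) y"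
  by (simp add: ketbra_def matrix_matrix_mult_def matrix_vector_mult_def vec_eq_iff
      sum_distrib_left mult_ac)

lemma ketbra_self_square: "ketbra z z ** ketbra z z = (norm z)\<^sup>2 *\<^sub>R ketbra z z"
  unfolding ketbra_mult_ketbra cinner_self ketbra_of_real_scale ..

lemma ketbra_sandwich:
  "ketbra z z ** ketbra v v ** ketbra z z = (cmod (cinner v z))\<^sup>2 *\<^sub>R ketbra z z"
proof -
  have overlap: "cinner v z * cinner z v = of_real ((cmod (cinner v z))\<^sup>2)"
    by (simp only: complex_norm_square cinner_commute[of z v])
  show ?thesis
    unfolding ketbra_mult_ketbra vector_smult_assoc overlap ketbra_of_real_scale ..
qed

section \<open>Positive operators\<close>

lemma pos_op_cnj_entry:
  assumes "pos_op A"
  shows "A $ j $ i = cnj (A $ i $ j)"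
proof -
  define q where "q x y = cinner x (A *v y)" for x y
  have real: "q x x \<in> \<real>" for x
    using assms by (simp add: pos_op_def q_def)
  have expand:
    "q (x + c *s y) (x + c *s y) = q x x + c * q x y + cnj c * q y x + cnj c * c * q y y"
    for x y c
    unfolding q_def matrix_vector_right_distrib matrix_vector_mult_scale cinner_add_left
      cinner_add_right cinner_scale_left cinner_scale_right
    by (simp add: algebra_simps)
  define x :: "complex^'a" where "x = axis i 1"
  define y :: "complex^'a" where "y = axis j 1"
  have "Im (q x y + q y x) = 0"
    using real[of "x + 1 *s y"] real[of x] real[of y] unfolding expand
    by (simp add: complex_is_Real_iff)
  moreover have "Re (q x y - q y x) = 0"
    using real[of "x + \<i> *s y"] real[of x] real[of y] unfolding expand
    by (simp add: complex_is_Real_iff)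
  ultimately have "q y x = cnj (q x y)"
    by (simp add: complex_eq_iff)
  then show ?thesis
    by (simp add: q_def x_def y_def cinner_matrix_axis)
qed

lemma ketbra_mult_pos_op:
  assumes "pos_op A"
  shows "ketbra x y ** A = ketbra x (A *v y)"
  using pos_op_cnj_entry[OF assms, symmetric]
  by (simp add: ketbra_def matrix_matrix_mult_def matrix_vector_mult_def vec_eq_iff
      sum_distrib_left mult_ac)

lemma pos_op_add: "pos_op A \<Longrightarrow> pos_op B \<Longrightarrow> pos_op (A + B)"
  by (simp add: pos_op_def matrix_vector_mult_add_rdistrib cinner_add_right)

lemma pos_op_scaleR:
  assumes "0 \<le> r" "pos_op A"
  shows "pos_op (r *\<^sub>R A)"
proof -
  have "cinner x ((r *\<^sub>R A) *v x) = of_real r * cinner x (A *v x)" for x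
    by (simp add: scaleR_matrix_vector_mult cinner_def sum_distrib_left mult_ac
        scaleR_conv_of_real[where 'a=complex])
  then show ?thesis
    using assms by (simp add: pos_op_def)
qed

lemma pos_op_mat_1: "pos_op (mat 1)"
  by (simp add: pos_op_def cinner_self)

lemma pos_op_ketbra_self: "pos_op (ketbra z z)"
proof -
  have "cinner x (ketbra z z *v x) = of_real ((cmod (cinner z x))\<^sup>2)" for x
    unfolding ketbra_mult_vector cinner_scale_right complex_norm_square
    by (simp add: cinner_commute[of z])
  then show ?thesis
    by (simp add: pos_op_def)
qed

lemma pos_op_commute_ketbra_iff:
  assumes "pos_op A" "cinner v v = 1"
  shows "A ** ketbra v v = ketbra v v ** A \<longleftrightarrow> A *v v = cinner v (A *v v) *s v"
proof
  assume comm: "A ** ketbra v v = ketbra v v ** A"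
  have "A *v v = A *v (ketbra v v *v v)"
    by (simp add: ketbra_mult_vector assms(2))
  also have "\<dots> = ketbra v v *v (A *v v)"
    by (simp add: matrix_vector_mul_assoc comm)
  finally show "A *v v = cinner v (A *v v) *s v"
    by (simp add: ketbra_mult_vector)
next
  assume eigen: "A *v v = cinner v (A *v v) *s v"
  have "cnj (cinner v (A *v v)) = cinner v (A *v v)"
    using assms(1) by (simp add: pos_op_def Reals_cnj_iff)
  then have "ketbra (A *v v) v = ketbra v (A *v v)"
    by (metis eigen ketbra_scale_left)
  then show "A ** ketbra v v = ketbra v v ** A"
    by (simp add: matrix_mult_ketbra ketbra_mult_pos_op assms(1))
qed

section \<open>Square roots of positive 2x2 matrices\<close>

lemma quadratic_nonneg_imp_le:
  fixes a d b :: real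
  assumes "0 \<le> a" "0 \<le> d" "0 \<le> b" and nonneg: "\<And>r. 0 \<le> a * r\<^sup>2 - 2 * r * b + d * b"
  shows "b \<le> a * d"
proof (cases "a = 0")
  case True
  have "0 \<le> a * (d + 1)\<^sup>2 - 2 * (d + 1) * b + d * b"
    by (rule nonneg)
  with True have "(d + 2) * b \<le> 0"
    by (simp add: algebra_simps)
  with assms(2) have "b \<le> 0"
    by (simp add: mult_le_0_iff)
  with True assms(3) show ?thesis
    by simp
next
  case False
  with assms(1) have "0 < a" by simp
  have "0 \<le> a * (b / a)\<^sup>2 - 2 * (b / a) * b + d * b"
    by (rule nonneg)
  also have "\<dots> = b * (a * d - b) / a"
    using \<open>0 < a\<close> by (simp add: power2_eq_square field_simps)
  finally have "0 \<le> b * (a * d - b)"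
    using \<open>0 < a\<close> by (simp add: zero_le_divide_iff)
  then show ?thesis
    using assms(3) by (cases "b = 0") (auto simp: zero_le_mult_iff assms(1,2))
qed

lemma pos_op_2_entries:
  fixes A :: "complex^2^2"
  assumes "pos_op A"
  obtains a d b where "A $ 1 $ 1 = of_real a" "A $ 2 $ 2 = of_real d" "A $ 1 $ 2 = b"
    "A $ 2 $ 1 = cnj b" "0 \<le> a" "0 \<le> d" "(cmod b)\<^sup>2 \<le> a * d"
proof -
  have diag: "Im (A $ i $ i) = 0 \<and> 0 \<le> Re (A $ i $ i)" for i
    using assms unfolding pos_op_def cinner_matrix_axis[of i A i, symmetric]
    by (simp add: complex_is_Real_iff)
  define a d b where "a = Re (A $ 1 $ 1)" and "d = Re (A $ 2 $ 2)" and "b = A $ 1 $ 2"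
  have A: "A $ 1 $ 1 = of_real a" "A $ 2 $ 2 = of_real d" "A $ 2 $ 1 = cnj b"
    using diag pos_op_cnj_entry[OF assms, where i=1 and j=2]
    by (simp_all add: a_def d_def b_def complex_eq_iff)
  have "0 \<le> a * r\<^sup>2 - 2 * r * (cmod b)\<^sup>2 + d * (cmod b)\<^sup>2" for r
  proof -
    define x :: "complex^2" where "x = vector [of_real r, - cnj b]"
    have q: "cinner x (A *v x) = of_real (a * r\<^sup>2 - 2 * r * (cmod b)\<^sup>2 + d * (cmod b)\<^sup>2)"
      by (simp add: x_def cinner_def matrix_vector_mult_def sum_2 A b_def[symmetric]
          complex_eq_iff cmod_power2[of b, unfolded power2_eq_square] power2_eq_square
          algebra_simps)
    have "0 \<le> Re (cinner x (A *v x))"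
      using assms by (simp add: pos_op_def)
    then show ?thesis
      by (simp only: q Re_complex_of_real)
  qed
  then have "(cmod b)\<^sup>2 \<le> a * d"
    by (rule quadratic_nonneg_imp_le[rotated 3]) (use diag in \<open>simp_all add: a_def d_def\<close>)
  with A diag that show ?thesis
    by (simp add: a_def d_def b_def)
qed

lemma pos_op_2_trace_det:
  fixes A :: "complex^2^2"
  assumes "pos_op A"
  shows "trace A = of_real (Re (trace A))" "0 \<le> Re (trace A)"
    and "det A = of_real (Re (det A))" "0 \<le> Re (det A)"
proof -
  obtain a d b where A: "A $ 1 $ 1 = of_real a" "A $ 2 $ 2 = of_real d" "A $ 1 $ 2 = b"
    "A $ 2 $ 1 = cnj b" and nonneg: "0 \<le> a" "0 \<le> d" "(cmod b)\<^sup>2 \<le> a * d"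
    using pos_op_2_entries[OF assms] .
  have "trace A = of_real (a + d)" "det A = of_real (a * d - (cmod b)\<^sup>2)"
    by (simp_all add: trace_def sum_2 det_2 A mult.commute flip: complex_norm_square)
  with nonneg show "trace A = of_real (Re (trace A))" "0 \<le> Re (trace A)"
    "det A = of_real (Re (det A))" "0 \<le> Re (det A)"
    by simp_all
qed

lemma pos_op_2_trace_eq_0:
  fixes A :: "complex^2^2"
  assumes "pos_op A" "trace A = 0"
  shows "A = 0"
proof -
  obtain a d b where A: "A $ 1 $ 1 = of_real a" "A $ 2 $ 2 = of_real d" "A $ 1 $ 2 = b"
    "A $ 2 $ 1 = cnj b" and nonneg: "0 \<le> a" "0 \<le> d" "(cmod b)\<^sup>2 \<le> a * d"
    using pos_op_2_entries[OF assms(1)] .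
  from assms(2) have "a + d = 0"
    by (simp add: trace_def sum_2 A flip: of_real_add)
  with nonneg have "a = 0" "d = 0"
    by linarith+
  moreover from nonneg this have "b = 0"
    by simp
  ultimately show ?thesis
    using A
    by (simp add: vec_eq_iff forall_2)
qed

lemma cayley_hamilton_2: "A ** A = mat (trace A) ** A - mat (det A)"
  for A :: "'a::comm_ring_1^2^2"
  by (simp add: vec_eq_iff forall_2 matrix_matrix_mult_def sum_2 trace_def det_2 mat_def
      algebra_simps)

lemma trace_square_2: "trace (A ** A) = (trace A)\<^sup>2 - 2 * det A"
  for A :: "'a::comm_ring_1^2^2"
  by (simp add: matrix_matrix_mult_def sum_2 trace_def det_2 power2_eq_square algebra_simps)

lemma pos_op_2_cayley_hamilton:
  fixes A :: "complex^2^2"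
  assumes "pos_op A"
  shows "A ** A = Re (trace A) *\<^sub>R A - Re (det A) *\<^sub>R mat 1"
  using cayley_hamilton_2[of A] pos_op_2_trace_det[OF assms]
  by (metis mat_of_real matrix_mul_lid scalar_matrix_assoc)

(* A positive root B of A satisfies B^2 - (tr B) B + (det B) I = 0, where det B = sqrt (det A)
   and (tr B)^2 = tr A + 2 det B.  If the denominator vanishes, then A = 0, and division by zero
   makes the formula 0 as well. *)
definition sqrt2x2 :: "complex^2^2 \<Rightarrow> complex^2^2" where
  "sqrt2x2 A =
    (let s = sqrt (Re (det A)) in (1 / sqrt (Re (trace A) + 2 * s)) *\<^sub>R (A + s *\<^sub>R mat 1))"

lemma sqrt2x2_square:
  assumes "pos_op B"
  shows "sqrt2x2 (B ** B) = B"
proof -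
  define \<tau> \<delta> where "\<tau> = Re (trace B)" and "\<delta> = Re (det B)"
  have B: "trace B = of_real \<tau>" "0 \<le> \<tau>" "det B = of_real \<delta>" "0 \<le> \<delta>"
    using pos_op_2_trace_det[OF assms] by (simp_all add: \<tau>_def \<delta>_def)
  have "Re (det (B ** B)) = \<delta>\<^sup>2"
    by (simp add: det_mul B power2_eq_square)
  then have s: "sqrt (Re (det (B ** B))) = \<delta>"
    using B(4) by simp
  have "Re (trace (B ** B)) + 2 * \<delta> = \<tau>\<^sup>2"
    by (simp add: trace_square_2 B)
  then have t: "sqrt (Re (trace (B ** B)) + 2 * \<delta>) = \<tau>"
    using B(2) by simp
  have "B ** B + \<delta> *\<^sub>R mat 1 = \<tau> *\<^sub>R B"
    using pos_op_2_cayley_hamilton[OF assms] by (simp add: \<tau>_def \<delta>_def)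
  then have "sqrt2x2 (B ** B) = (1 / \<tau>) *\<^sub>R \<tau> *\<^sub>R B"
    by (simp add: sqrt2x2_def s t)
  also have "\<dots> = B"
    using pos_op_2_trace_eq_0[OF assms] B(1) by (cases "\<tau> = 0") simp_all
  finally show ?thesis .
qed

lemma sqrt2x2_root:
  assumes "pos_op A"
  shows "pos_op (sqrt2x2 A)" "sqrt2x2 A ** sqrt2x2 A = A"
proof -
  define \<tau> \<delta> where "\<tau> = Re (trace A)" and "\<delta> = Re (det A)"
  define s t where "s = sqrt \<delta>" and "t = sqrt (\<tau> + 2 * s)"
  define M where "M = A + s *\<^sub>R mat 1"
  have A: "trace A = of_real \<tau>" "0 \<le> \<tau>" "0 \<le> \<delta>"
    using pos_op_2_trace_det[OF assms] by (simp_all add: \<tau>_def \<delta>_def)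
  have root: "sqrt2x2 A = (1 / t) *\<^sub>R M"
    by (simp add: sqrt2x2_def Let_def M_def s_def t_def \<tau>_def \<delta>_def)
  show "pos_op (sqrt2x2 A)"
    unfolding root M_def using A
    by (intro pos_op_scaleR pos_op_add assms pos_op_mat_1) (simp_all add: s_def t_def)
  have "M ** M = A ** A + s *\<^sub>R A + s *\<^sub>R A + (s * s) *\<^sub>R mat 1"
    by (simp add: M_def matrix_add_ldistrib matrix_add_rdistrib matrix_scalar_ac
        scaleR_add_right add.assoc flip: scalar_matrix_assoc)
  also have "\<dots> = (\<tau> + s + s) *\<^sub>R A"
    unfolding pos_op_2_cayley_hamilton[OF assms] scaleR_add_left
    using A by (simp add: s_def flip: \<tau>_def \<delta>_def)
  also have "\<tau> + s + s = t\<^sup>2"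
    using A by (simp add: t_def s_def)
  finally have MM: "M ** M = t\<^sup>2 *\<^sub>R A" .
  show "sqrt2x2 A ** sqrt2x2 A = A"
  proof (cases "t = 0")
    case True
    then have "\<tau> + 2 * s = 0"
      by (simp add: t_def)
    moreover have "0 \<le> s"
      by (simp add: s_def A(3))
    ultimately have "trace A = 0"
      using A(1,2) by simp
    then have "A = 0"
      by (rule pos_op_2_trace_eq_0[OF assms])
    moreover have "sqrt2x2 A = 0"
      using True by (simp add: root)
    ultimately show ?thesis
      by simp
  next
    case False
    then show ?thesis
      by (simp add: root matrix_scalar_ac MM power2_eq_square flip: scalar_matrix_assoc)
  qed
qed

lemma op_sqrt_eqI:
  fixes B :: "complex^2^2"
  assumes "pos_op B" "B ** B = A"
  shows "op_sqrt A = B"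
  unfolding op_sqrt_def
proof (rule the_equality)
  show "pos_op B \<and> B ** B = A"
    using assms by simp
  fix C
  assume "pos_op C \<and> C ** C = A"
  then have "C = sqrt2x2 A"
    using sqrt2x2_square by metis
  also have "\<dots> = B"
    using assms sqrt2x2_square by metis
  finally show "C = B" .
qed

lemma op_sqrt_eq_sqrt2x2:
  assumes "pos_op A"
  shows "op_sqrt A = sqrt2x2 A"
  using assms by (intro op_sqrt_eqI sqrt2x2_root)

lemma pos_op_op_sqrt: "pos_op A \<Longrightarrow> pos_op (op_sqrt A)"
  for A :: "complex^2^2"
  by (simp add: op_sqrt_eq_sqrt2x2 sqrt2x2_root)

lemma op_sqrt_square: "pos_op A \<Longrightarrow> op_sqrt A ** op_sqrt A = A"
  for A :: "complex^2^2"
  by (simp add: op_sqrt_eq_sqrt2x2 sqrt2x2_root)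

lemma op_sqrt_commute:
  fixes A :: "complex^2^2"
  assumes "pos_op A" "A ** C = C ** A"
  shows "op_sqrt A ** C = C ** op_sqrt A"
  using assms(2)
  by (simp add: op_sqrt_eq_sqrt2x2[OF assms(1)] sqrt2x2_def Let_def matrix_add_ldistrib
      matrix_add_rdistrib matrix_scalar_ac scaleR_add_right flip: scalar_matrix_assoc)

lemma op_sqrt_scaled_ketbra:
  fixes z :: "complex^2"
  assumes "0 \<le> c"
  shows "op_sqrt (c *\<^sub>R ketbra z z) = (sqrt c / norm z) *\<^sub>R ketbra z z"
proof (rule op_sqrt_eqI)
  show "pos_op ((sqrt c / norm z) *\<^sub>R ketbra z z)"
    using assms by (simp add: pos_op_scaleR pos_op_ketbra_self)
  show "(sqrt c / norm z) *\<^sub>R ketbra z z ** (sqrt c / norm z) *\<^sub>R ketbra z z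
    = c *\<^sub>R ketbra z z"
    using assms by (cases "z = 0") (simp_all add: ketbra_zero_left matrix_scalar_ac
        ketbra_self_square power2_eq_square flip: scalar_matrix_assoc)
qed

lemma op_sqrt_scaled_ketbra_sandwich:
  fixes z :: "complex^2"
  assumes "0 \<le> c"
  shows "op_sqrt (c *\<^sub>R ketbra z z) ** ketbra v v ** op_sqrt (c *\<^sub>R ketbra z z)
    = (c * (cmod (cinner v z) / norm z)\<^sup>2) *\<^sub>R ketbra z z"
  using assms
  by (simp add: op_sqrt_scaled_ketbra matrix_scalar_ac ketbra_sandwich power_divide
      power2_eq_square flip: scalar_matrix_assoc)

section \<open>The iteration\<close>

lemma unit_complement_2:
  fixes u :: "complex^2"
  assumes "cinner u u = 1"
  obtains v where "cinner v v = 1" "mat 1 - ketbra u u = ketbra v v"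
proof
  define v :: "complex^2" where "v = vector [- cnj (u $ 2), cnj (u $ 1)]"
  have unit: "cnj (u $ 1) * u $ 1 + cnj (u $ 2) * u $ 2 = 1"
    using assms by (simp add: cinner_def sum_2)
  then show "cinner v v = 1"
    by (simp add: v_def cinner_def sum_2 algebra_simps)
  have "1 - u $ 1 * cnj (u $ 1) = cnj (u $ 2) * u $ 2"
    and "1 - u $ 2 * cnj (u $ 2) = cnj (u $ 1) * u $ 1"
    using unit by (simp_all add: algebra_simps)
  then show "mat 1 - ketbra u u = ketbra v v"
    by (simp add: v_def vec_eq_iff forall_2 ketbra_def mat_def algebra_simps)
qed

lemma Rseq_rank_one:
  fixes R :: "complex^2^2"
  assumes "pos_op R" "mat 1 - P = ketbra v v"
  defines "w \<equiv> op_sqrt R *v v"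
  shows "Rseq P R (Suc n) = ((cmod (cinner v w) / norm w)\<^sup>2) ^ n *\<^sub>R ketbra w w"
proof (induction n)
  case 0
  show ?case
    using assms by (simp add: matrix_mult_ketbra ketbra_mult_pos_op pos_op_op_sqrt)
next
  case (Suc n)
  then show ?case
    by (simp add: assms(2) op_sqrt_scaled_ketbra_sandwich mult.commute)
qed

lemma Rseq_tendsto_0_if_not_commute:
  fixes R :: "complex^2^2"
  assumes "pos_op R" "cinner v v = 1" "mat 1 - P = ketbra v v" "P ** R \<noteq> R ** P"
  shows "(\<lambda>n. opnorm (Rseq P R n)) \<longlonglongrightarrow> 0"
proof -
  define S w where "S = op_sqrt R" and "w = S *v v"
  define \<kappa> where "\<kappa> = (cmod (cinner v w) / norm w)\<^sup>2"
  have "\<kappa> \<noteq> 1"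
  proof
    assume "\<kappa> = 1"
    then have "w \<noteq> 0"
      by (auto simp: \<kappa>_def)
    with \<open>\<kappa> = 1\<close> have "S *v v = cinner v (S *v v) *s v"
      using overlap_eq_1_iff[OF assms(2)] by (simp add: \<kappa>_def w_def)
    then have SQ: "S ** ketbra v v = ketbra v v ** S"
      using pos_op_commute_ketbra_iff[OF pos_op_op_sqrt[OF assms(1)] assms(2)]
      by (simp add: S_def)
    have "R ** ketbra v v = ketbra v v ** R"
      using matrix_commute_square[OF SQ] op_sqrt_square[OF assms(1)] by (simp add: S_def)
    then have "(mat 1 - P) ** R = R ** (mat 1 - P)"
      unfolding assms(3) by simp
    with assms(4) show False
      by (simp add: mat_1_diff_commute_iff)
  qed
  moreover have "\<kappa> \<le> 1"
    unfolding \<kappa>_def by (rule overlap_le_1[OF assms(2)])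
  ultimately have "\<kappa> < 1"
    by simp
  have "0 \<le> \<kappa>"
    by (simp add: \<kappa>_def)
  with \<open>\<kappa> < 1\<close> have "(\<lambda>n. \<kappa> ^ n * opnorm (ketbra w w)) \<longlonglongrightarrow> 0"
    by (simp add: LIMSEQ_power_zero tendsto_mult_left_zero)
  moreover have "opnorm (Rseq P R (Suc n)) = \<kappa> ^ n * opnorm (ketbra w w)" for n
    unfolding Rseq_rank_one[OF assms(1,3)] opnorm_scaleR
    using \<open>0 \<le> \<kappa>\<close> by (simp add: \<kappa>_def w_def S_def)
  ultimately have "(\<lambda>n. opnorm (Rseq P R (Suc n))) \<longlonglongrightarrow> 0"
    by (simp only:)
  then show ?thesis
    by (rule LIMSEQ_imp_Suc)
qed

lemma op_sqrt_sandwich_commuting_idempotent: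
  fixes R Q :: "complex^2^2"
  assumes "pos_op R" "Q ** Q = Q" "Q ** R = R ** Q"
  shows "op_sqrt R ** Q ** op_sqrt R = Q ** R ** Q"
  using matrix_commute_idempotent_sandwich[OF op_sqrt_commute[OF assms(1) assms(3)[symmetric]]
      assms(2)]
  by (simp add: op_sqrt_square[OF assms(1)])

lemma Rseq_stationary_if_commute:
  fixes R :: "complex^2^2"
  assumes "pos_op R" "cinner v v = 1" "mat 1 - P = ketbra v v" "P ** R = R ** P"
  shows "Rseq P R (Suc n) = op_sqrt R ** (mat 1 - P) ** op_sqrt R"
proof -
  define S w where "S = op_sqrt R" and "w = S *v v"
  have "(mat 1 - P) ** R = R ** (mat 1 - P)"
    using assms(4) by (simp only: mat_1_diff_commute_iff)
  then have "S ** ketbra v v = ketbra v v ** S"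
    using op_sqrt_commute[OF assms(1)] by (simp only: S_def assms(3) eq_commute)
  then have "w = cinner v w *s v"
    using pos_op_commute_ketbra_iff[OF pos_op_op_sqrt[OF assms(1)] assms(2)]
    by (simp add: w_def S_def)
  then have "w = 0 \<or> (cmod (cinner v w) / norm w)\<^sup>2 = 1"
    using overlap_eq_1_iff[OF assms(2)] by blast
  then have "Rseq P R (Suc n) = Rseq P R (Suc 0)"
    unfolding Rseq_rank_one[OF assms(1,3)] by (auto simp: ketbra_zero_left w_def S_def)
  then show ?thesis
    by simp
qed

theorem lemma2p1:
  fixes u :: "complex^2" and R :: "complex^2^2" and P :: "complex^2^2"
  assumes "cinner u u = 1"
    and "P = ketbra u u"
    and "pos_op R"
  shows "(P ** R \<noteq> R ** P \<longrightarrow>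
            (\<lambda>n. opnorm (Rseq P R n - 0)) \<longlonglongrightarrow> 0)
       \<and> (P ** R = R ** P \<longrightarrow>
            op_sqrt R ** (mat 1 - P) ** op_sqrt R = (mat 1 - P) ** R ** (mat 1 - P)
          \<and> (\<lambda>n. opnorm (Rseq P R n - op_sqrt R ** (mat 1 - P) ** op_sqrt R)) \<longlonglongrightarrow> 0)"
proof -
  obtain v where v: "cinner v v = 1" "mat 1 - P = ketbra v v"
    using unit_complement_2[OF assms(1)] assms(2) by metis
  show ?thesis
  proof (intro conjI impI)
    assume "P ** R \<noteq> R ** P"
    then show "(\<lambda>n. opnorm (Rseq P R n - 0)) \<longlonglongrightarrow> 0"
      using Rseq_tendsto_0_if_not_commute[OF assms(3) v] by simp
  next
    assume commute: "P ** R = R ** P"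
    have "(mat 1 - P) ** (mat 1 - P) = mat 1 - P"
      using v by (simp add: ketbra_mult_ketbra)
    moreover have "(mat 1 - P) ** R = R ** (mat 1 - P)"
      using commute by (simp only: mat_1_diff_commute_iff)
    ultimately show "op_sqrt R ** (mat 1 - P) ** op_sqrt R = (mat 1 - P) ** R ** (mat 1 - P)"
      by (rule op_sqrt_sandwich_commuting_idempotent[OF assms(3)])
    have "opnorm (Rseq P R (Suc n) - op_sqrt R ** (mat 1 - P) ** op_sqrt R) = 0" for n
      using Rseq_stationary_if_commute[OF assms(3) v commute]
      by (simp add: opnorm_def onorm_zero)
    then have "(\<lambda>n. opnorm (Rseq P R (Suc n) - op_sqrt R ** (mat 1 - P) ** op_sqrt R))
        \<longlonglongrightarrow> 0"
      by (simp only: tendsto_const)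
    then show "(\<lambda>n. opnorm (Rseq P R n - op_sqrt R ** (mat 1 - P) ** op_sqrt R)) \<longlonglongrightarrow> 0"
      by (rule LIMSEQ_imp_Suc)
  qed
qed

end
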